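(* Let $\Gamma$ be a single-player extensive-form game and let $\mathscr C$ be the class of all single-player games sharing the same game tree and infoset partition as $\Gamma$ (with arbitrary nonnegative utilities). Then $$\mathrm{VoR}^{\mathrm{opt}}(\mathscr C)\le \max_{z\in\mathcal Z,\,h\in\mathcal H_c}\frac{\beta(h)}{\alpha(z)}.$$
   Context: An extensive-form game consists of a finite rooted tree with node set $\mathcal H$, leaves $\mathcal Z$, actions $A_h$ at nonterminal $h$; nonterminal nodes belong either to the single player (Player 1) or to chance; $\mathcal H_c$ is the set of chance nodes, each with a fixed distribution $\mathbb P_c(\cdot\mid h)$ on $A_h$. Player 1 has utility $u_1:\mathcal Z\to\mathbb R_{\ge0}$ and a partition $\mathcal I_1$ of its nodes into infosets, with a common action set $A_I$ for all nodes of an infoset $I$. The game tree is $\mathcal H$ with its actions and chance distributions. For a node $h$ at depth $d$, let $(h_0,\dots,h_{d-1})$ be the root-to-$h$ path (excluding $h$) and $\mathrm{obs}(h)=(i_k,I_k,a_k)_{k=0}^{d-1}$ with $i_k$ the player (1 or chance) at $h_k$, $I_k$ the infoset of $h_k$ (for player nodes), $a_k$ the action taken at $h_k$. A behavioral strategy $\pi$ assigns $\pi(\cdot\mid I)\in\Delta(A_I)$ to each $I$; $\mathbb P(z\mid\pi)$ is the reach probability of $z$; $U_1(\pi)=\sum_z\mathbb P(z\mid\pi)u_1(z)$; $u_1(\mathrm{opt}(\Gamma))=\max_\pi U_1(\pi)$. $\mathrm{pr}_1(\Gamma)$ has the same tree and utilities, with each $I\in\mathcal I_1$ partitioned by $h\sim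 h'\iff\mathrm{obs}_1(h)=\mathrm{obs}_1(h')$, where $\mathrm{obs}_1$ is the subsequence of $\mathrm{obs}$ with $i_k=1$. $\mathrm{VoR}^{\mathrm{opt}}(\Gamma)=u_1(\mathrm{opt}(\mathrm{pr}_1(\Gamma)))/u_1(\mathrm{opt}(\Gamma))$, and $\mathrm{VoR}^{\mathrm{opt}}(\mathscr C)=\sup_{\Gamma\in\mathscr C}\mathrm{VoR}^{\mathrm{opt}}(\Gamma)$. Absentmindedness coefficient: for $z\in\mathcal Z$, $I\in\mathcal I_1$ and $a\in A_I$, let $n_z(I)=|\{k:I_k=I\}|$, $n_z(a)=|\{k:I_k=I,a_k=a\}|$, $p_z(a)=n_z(a)/n_z(I)$, and $\alpha(z)=\prod_{I\in\mathcal I_1:n_z(I)>1}\ \prod_{a\in A_I:n_z(a)>0}p_z(a)^{n_z(a)}\in(0,1]$. Branching factor: for a chance node $h$ and $a\in A_h$, let $H_{ha}$ be the set of chance nodes in the subtree rooted at the child of $h$ reached by $a$; set $b_h(a)=1$ if $H_{ha}=\emptyset$ and $b_h(a)=\max_{h'\in H_{ha}}\beta(h')$ otherwise, and $\beta(h)=\sum_{a\in A_h}b_h(a)$ (defined recursively bottom-up). By convention, $\max_{h\in\mathcal H_c}\beta(h)=1$ if $\mathcal H_c=\emptyset$. *)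

theory Defs
  imports Complex_Main "HOL-Library.Extended_Real"
begin

text \<open>
Game trees: nodes are action histories (lists of actions), the node set H is a
finite prefix-closed set of lists containing the root [].
\<close>

definition acts :: "'a list set \<Rightarrow> 'a list \<Rightarrow> 'a set" where
  "acts H h = {a. h @ [a] \<in> H}"

definition leaves :: "'a list set \<Rightarrow> 'a list set" where
  "leaves H = {h \<in> H. acts H h = {}}"

definition pnodes :: "'a list set \<Rightarrow> 'a list set \<Rightarrow> 'a list set" where
  "pnodes H Hc = {h \<in> H. acts H h \<noteq> {}} - Hc"

definition wf_game :: "'a list set \<Rightarrow> 'a list set \<Rightarrow> ('a list \<Rightarrow> 'a \<Rightarrow> real)
    \<Rightarrow> ('a list \<Rightarrow> 'i) \<Rightarrow> bool" where
  "wf_game H Hc Pc infs \<longleftrightarrow>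
     finite H \<and> [] \<in> H \<and> (\<forall>h a. h @ [a] \<in> H \<longrightarrow> h \<in> H) \<and>
     Hc \<subseteq> H - leaves H \<and>
     (\<forall>h\<in>Hc. (\<forall>a\<in>acts H h. Pc h a \<ge> 0) \<and> (\<Sum>a\<in>acts H h. Pc h a) = 1) \<and>
     (\<forall>h\<in>pnodes H Hc. \<forall>h'\<in>pnodes H Hc. infs h = infs h' \<longrightarrow> acts H h = acts H h')"

definition valid_strat :: "'a list set \<Rightarrow> 'a list set \<Rightarrow> ('a list \<Rightarrow> 'j)
    \<Rightarrow> ('j \<Rightarrow> 'a \<Rightarrow> real) \<Rightarrow> bool" where
  "valid_strat H Hc infs \<pi> \<longleftrightarrow>
     (\<forall>h\<in>pnodes H Hc. (\<forall>a\<in>acts H h. \<pi> (infs h) a \<ge> 0) \<and> (\<Sum>a\<in>acts H h. \<pi> (infs h) a) = 1)"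

definition reach :: "'a list set \<Rightarrow> ('a list \<Rightarrow> 'a \<Rightarrow> real) \<Rightarrow> ('a list \<Rightarrow> 'j)
    \<Rightarrow> ('j \<Rightarrow> 'a \<Rightarrow> real) \<Rightarrow> 'a list \<Rightarrow> real" where
  "reach Hc Pc infs \<pi> z =
     (\<Prod>k<length z. if take k z \<in> Hc then Pc (take k z) (z ! k) else \<pi> (infs (take k z)) (z ! k))"

definition util :: "'a list set \<Rightarrow> 'a list set \<Rightarrow> ('a list \<Rightarrow> 'a \<Rightarrow> real) \<Rightarrow> ('a list \<Rightarrow> 'j)
    \<Rightarrow> ('a list \<Rightarrow> real) \<Rightarrow> ('j \<Rightarrow> 'a \<Rightarrow> real) \<Rightarrow> real" where
  "util H Hc Pc infs u \<pi> = (\<Sum>z\<in>leaves H. reach Hc Pc infs \<pi> z * u z)"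

text \<open>Optimal value u_1(opt(Gamma)) (a maximum; written as a supremum).\<close>
definition opt_val :: "'a list set \<Rightarrow> 'a list set \<Rightarrow> ('a list \<Rightarrow> 'a \<Rightarrow> real) \<Rightarrow> ('a list \<Rightarrow> 'j)
    \<Rightarrow> ('a list \<Rightarrow> real) \<Rightarrow> real" where
  "opt_val H Hc Pc infs u = Sup (util H Hc Pc infs u ` {\<pi>. valid_strat H Hc infs \<pi>})"

definition obs1 :: "'a list set \<Rightarrow> 'a list set \<Rightarrow> ('a list \<Rightarrow> 'i) \<Rightarrow> 'a list \<Rightarrow> ('i \<times> 'a) list" where
  "obs1 H Hc infs h =
     map (\<lambda>k. (infs (take k h), h ! k)) (filter (\<lambda>k. take k h \<in> pnodes H Hc) [0..<length h])"

text \<open>Infoset labelling of pr_1(Gamma): h ~ h' iff same infoset and same obs_1.\<close>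
definition pr_inf :: "'a list set \<Rightarrow> 'a list set \<Rightarrow> ('a list \<Rightarrow> 'i) \<Rightarrow> 'a list \<Rightarrow> 'i \<times> ('i \<times> 'a) list" where
  "pr_inf H Hc infs h = (infs h, obs1 H Hc infs h)"

definition VoR_opt :: "'a list set \<Rightarrow> 'a list set \<Rightarrow> ('a list \<Rightarrow> 'a \<Rightarrow> real) \<Rightarrow> ('a list \<Rightarrow> 'i)
    \<Rightarrow> ('a list \<Rightarrow> real) \<Rightarrow> real" where
  "VoR_opt H Hc Pc infs u = opt_val H Hc Pc (pr_inf H Hc infs) u / opt_val H Hc Pc infs u"

definition n_I :: "'a list set \<Rightarrow> 'a list set \<Rightarrow> ('a list \<Rightarrow> 'i) \<Rightarrow> 'a list \<Rightarrow> 'i \<Rightarrow> nat" where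
  "n_I H Hc infs z I = card {k. k < length z \<and> take k z \<in> pnodes H Hc \<and> infs (take k z) = I}"

definition n_a :: "'a list set \<Rightarrow> 'a list set \<Rightarrow> ('a list \<Rightarrow> 'i) \<Rightarrow> 'a list \<Rightarrow> 'i \<Rightarrow> 'a \<Rightarrow> nat" where
  "n_a H Hc infs z I a =
     card {k. k < length z \<and> take k z \<in> pnodes H Hc \<and> infs (take k z) = I \<and> z ! k = a}"

definition alpha :: "'a list set \<Rightarrow> 'a list set \<Rightarrow> ('a list \<Rightarrow> 'i) \<Rightarrow> 'a list \<Rightarrow> real" where
  "alpha H Hc infs z =
     (\<Prod>I\<in>{I. (\<exists>k<length z. take k z \<in> pnodes H Hc \<and> infs (take k z) = I) \<and> 1 < n_I H Hc infs z I}.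
       \<Prod>a\<in>{z ! k |k. k < length z \<and> take k z \<in> pnodes H Hc \<and> infs (take k z) = I}.
         (real (n_a H Hc infs z I a) / real (n_I H Hc infs z I)) ^ n_a H Hc infs z I a)"

text \<open>Branching factor, by bottom-up recursion (with a fuel argument bounding the
  recursion depth; fuel card H always suffices since histories in H have length < card H).\<close>
fun beta_fuel :: "nat \<Rightarrow> 'a list set \<Rightarrow> 'a list set \<Rightarrow> 'a list \<Rightarrow> nat" where
  "beta_fuel 0 H Hc h = 0"
| "beta_fuel (Suc n) H Hc h =
     (\<Sum>a\<in>acts H h.
        (let S = {h' \<in> Hc. (\<exists>t. h' = h @ [a] @ t)} in
         if S = {} then 1 else Max (beta_fuel n H Hc ` S)))"

definition beta :: "'a list set \<Rightarrow> 'a list set \<Rightarrow> 'a list \<Rightarrow> nat" where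
  "beta H Hc h = beta_fuel (card H) H Hc h"

definition beta_max :: "'a list set \<Rightarrow> 'a list set \<Rightarrow> real" where
  "beta_max H Hc = (if Hc = {} then 1 else real (Max (beta H Hc ` Hc)))"

definition VoR_bound :: "'a list set \<Rightarrow> 'a list set \<Rightarrow> ('a list \<Rightarrow> 'i) \<Rightarrow> real" where
  "VoR_bound H Hc infs = Max ((\<lambda>z. beta_max H Hc / alpha H Hc infs z) ` leaves H)"

end

theory Submission
  imports Defs
begin

text \<open>
Split the reach probability of a leaf \<open>z\<close> into the chance part \<open>chance_reach z\<close> and the
player's part. For any behavioural strategy, of \<open>\<Gamma>\<close> or of any refinement of its infosets such
as \<open>pr\<^sub>1(\<Gamma>)\<close>, the player parts summed over all leaves are at most \<open>max\<^sub>h \<beta>(h)\<close>: going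
up the tree, at a chance node the sums of the subtrees add up, which is exactly what \<open>\<beta>\<close>
counts, while at a player node they are averaged. Hence every strategy earns at most
\<open>max\<^sub>h \<beta>(h) \<cdot> M\<close> with \<open>M = max\<^sub>z chance_reach z \<cdot> u z\<close>. Conversely, if \<open>z\<close> attains \<open>M\<close>,
the strategy that plays at every infoset the empirical action frequencies along \<open>z\<close> reaches \<open>z\<close>
with player probability exactly \<open>\<alpha>(z)\<close> (group the factors by infoset and then by action), so
\<open>opt(\<Gamma>) \<ge> \<alpha>(z) \<cdot> M\<close>.
\<close>

lemma Max_image_le_Max_image:
  assumes "finite T" "S \<subseteq> T" "S \<noteq> {}" "\<And>x. x \<in> S \<Longrightarrow> f x \<le> g x"
  shows "Max (f ` S) \<le> Max (g ` T)"
proof (rule Max.boundedI)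
  show "finite (f ` S)" using finite_subset[OF assms(2,1)] by simp
  show "f ` S \<noteq> {}" using assms(3) by simp
  fix y assume "y \<in> f ` S"
  then obtain x where "x \<in> S" "y = f x" by blast
  then show "y \<le> Max (g ` T)"
    using assms by (meson Max_ge finite_imageI imageI order_trans subsetD)
qed

lemma card_eq_sum_card_fibres:
  assumes "finite K" "finite T" "f ` K \<subseteq> T"
  shows "card K = (\<Sum>x\<in>T. card {k \<in> K. f k = x})"
  using sum.group[OF assms, of "\<lambda>_. 1 :: nat"] by simp

lemma prod_image_power:
  assumes "finite K"
  shows "(\<Prod>k\<in>K. g (f k)) = (\<Prod>x\<in>f ` K. g x ^ card {k \<in> K. f k = x})"
proof -
  have "(\<Prod>k\<in>K. g (f k)) = (\<Prod>x\<in>f ` K. \<Prod>k\<in>{k \<in> K. f k = x}. g (f k))"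
    by (rule prod.group[symmetric]) (use assms in auto)
  also have "\<dots> = (\<Prod>x\<in>f ` K. g x ^ card {k \<in> K. f k = x})"
    by (intro prod.cong refl) simp
  finally show ?thesis .
qed

lemma divide_le_divide_of_bounds:
  fixes a b m p q :: real
  assumes "a * m \<le> q" "p \<le> b * m" "0 < a" "0 \<le> m" "0 \<le> b"
  shows "p / q \<le> b / a"
proof (cases "q = 0")
  case False
  then have "0 < q" using assms(1,3,4) by (smt (verit) mult_nonneg_nonneg)
  have "p \<le> b / a * (a * m)" using assms(2,3) by simp
  also have "\<dots> \<le> b / a * q" using assms(1,3,5) by (intro mult_left_mono) auto
  finally show ?thesis using \<open>0 < q\<close> by (simp add: pos_divide_le_eq)
qed (use assms(3,5) in simp)

locale game_tree =
  fixes H Hc :: "'a list set"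
  assumes finite_H: "finite H"
    and root_in_H: "[] \<in> H"
    and snoc_in_H_imp: "h @ [a] \<in> H \<Longrightarrow> h \<in> H"
    and chance_nodes_subset: "Hc \<subseteq> H - leaves H"

definition consistent_labelling :: "'a list set \<Rightarrow> 'a list set \<Rightarrow> ('a list \<Rightarrow> 'j) \<Rightarrow> bool" where
  "consistent_labelling H Hc lab \<longleftrightarrow>
     (\<forall>h\<in>pnodes H Hc. \<forall>h'\<in>pnodes H Hc. lab h = lab h' \<longrightarrow> acts H h = acts H h')"

lemma wf_game_imp_game_tree: "wf_game H Hc Pc infs \<Longrightarrow> game_tree H Hc"
  unfolding wf_game_def game_tree_def by blast

lemma wf_game_imp_consistent_labelling: "wf_game H Hc Pc infs \<Longrightarrow> consistent_labelling H Hc infs"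
  unfolding wf_game_def consistent_labelling_def by blast

lemma wf_game_imp_chance_nonneg: "wf_game H Hc Pc infs \<Longrightarrow> \<forall>h\<in>Hc. \<forall>a\<in>acts H h. 0 \<le> Pc h a"
  unfolding wf_game_def by blast

lemma consistent_labelling_pr_inf:
  "consistent_labelling H Hc infs \<Longrightarrow> consistent_labelling H Hc (pr_inf H Hc infs)"
  unfolding consistent_labelling_def pr_inf_def prod.inject by blast

lemma finite_acts: "finite H \<Longrightarrow> finite (acts H h)"
proof -
  assume "finite H"
  moreover have "acts H h = (\<lambda>a. h @ [a]) -` H" unfolding acts_def by auto
  ultimately show ?thesis by (simp add: finite_vimageI inj_def)
qed

context game_tree
begin

lemma prefix_in_H: "h @ t \<in> H \<Longrightarrow> h \<in> H"
proof (induction t rule: rev_induct)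
  case (snoc a t)
  then show ?case using snoc_in_H_imp[of "h @ t" a] by simp
qed simp

lemma finite_Hc: "finite Hc"
  using chance_nodes_subset finite_H by (meson Diff_subset finite_subset)

lemma finite_leaves: "finite (leaves H)"
  using finite_H unfolding leaves_def by simp

lemma nth_in_acts_take:
  assumes "z \<in> H" "k < length z"
  shows "z ! k \<in> acts H (take k z)"
proof -
  have "take (Suc k) z \<in> H"
    using assms(1) prefix_in_H[of "take (Suc k) z" "drop (Suc k) z"] by simp
  then show ?thesis using assms(2) by (simp add: acts_def take_Suc_conv_app_nth)
qed

lemma take_in_pnodes_iff:
  assumes "z \<in> H" "k < length z"
  shows "take k z \<in> pnodes H Hc \<longleftrightarrow> take k z \<notin> Hc"
  using nth_in_acts_take[OF assms] prefix_in_H[of "take k z" "drop k z"] assms(1)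
  unfolding pnodes_def acts_def by auto

lemma leaf_extension_Nil: "h \<in> leaves H \<Longrightarrow> h @ t \<in> H \<Longrightarrow> t = []"
proof (cases t)
  case (Cons a t')
  moreover assume "h \<in> leaves H" "h @ t \<in> H"
  ultimately show ?thesis
    using prefix_in_H[of "h @ [a]" t'] by (simp add: leaves_def acts_def)
qed

lemma leaves_nonempty: "leaves H \<noteq> {}"
proof -
  have "Max (length ` H) \<in> length ` H"
    using finite_H root_in_H by (intro Max_in) auto
  then obtain z where z: "z \<in> H" "length z = Max (length ` H)" by auto
  have "length (z @ [a]) \<le> Max (length ` H)" if "z @ [a] \<in> H" for a
    using finite_H that by (intro Max_ge) (auto intro!: image_eqI)
  then have "z \<in> leaves H"
    using z unfolding leaves_def acts_def by fastforce
  then show ?thesis by blast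
qed

lemma length_less_card: "z \<in> H \<Longrightarrow> length z < card H"
proof -
  assume "z \<in> H"
  then have "(\<lambda>i. take i z) ` {0..length z} \<subseteq> H"
    using prefix_in_H[of "take _ z" "drop _ z"] by (metis append_take_drop_id image_subsetI)
  moreover have "inj_on (\<lambda>i. take i z) {0..length z}"
    by (rule inj_onI) (metis atLeastAtMost_iff length_take min.absorb2)
  ultimately have "card {0..length z} \<le> card H"
    using finite_H by (metis card_image card_mono)
  then show ?thesis by simp
qed

end

subsection \<open>Upper bound: player mass and branching factor\<close>

definition player_weight ::
    "'a list set \<Rightarrow> ('a list \<Rightarrow> 'j) \<Rightarrow> ('j \<Rightarrow> 'a \<Rightarrow> real) \<Rightarrow> 'a list \<Rightarrow> 'a \<Rightarrow> real" where
  "player_weight Hc lab \<pi> h a = (if h \<in> Hc then 1 else \<pi> (lab h) a)"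

definition player_reach_from ::
    "'a list set \<Rightarrow> ('a list \<Rightarrow> 'j) \<Rightarrow> ('j \<Rightarrow> 'a \<Rightarrow> real) \<Rightarrow> 'a list \<Rightarrow> nat \<Rightarrow> real" where
  "player_reach_from Hc lab \<pi> z i = (\<Prod>k\<in>{i..<length z}. player_weight Hc lab \<pi> (take k z) (z ! k))"

definition chance_reach :: "'a list set \<Rightarrow> ('a list \<Rightarrow> 'a \<Rightarrow> real) \<Rightarrow> 'a list \<Rightarrow> real" where
  "chance_reach Hc Pc z = (\<Prod>k<length z. if take k z \<in> Hc then Pc (take k z) (z ! k) else 1)"

definition chance_weighted_max ::
    "'a list set \<Rightarrow> 'a list set \<Rightarrow> ('a list \<Rightarrow> 'a \<Rightarrow> real) \<Rightarrow> ('a list \<Rightarrow> real) \<Rightarrow> real" where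
  "chance_weighted_max H Hc Pc u = Max ((\<lambda>z. chance_reach Hc Pc z * u z) ` leaves H)"

definition subtree_leaves :: "'a list set \<Rightarrow> 'a list \<Rightarrow> 'a list set" where
  "subtree_leaves H h = {z \<in> leaves H. \<exists>t. z = h @ t}"

definition player_mass ::
    "'a list set \<Rightarrow> 'a list set \<Rightarrow> ('a list \<Rightarrow> 'j) \<Rightarrow> ('j \<Rightarrow> 'a \<Rightarrow> real) \<Rightarrow> 'a list \<Rightarrow> real" where
  "player_mass H Hc lab \<pi> h = (\<Sum>z\<in>subtree_leaves H h. player_reach_from Hc lab \<pi> z (length h))"

definition chance_below :: "'a list set \<Rightarrow> 'a list \<Rightarrow> 'a list set" where
  "chance_below Hc h = {c \<in> Hc. \<exists>t. c = h @ t}"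

text \<open>\<open>beta_below n H Hc (h @ [a])\<close> is the paper's \<open>b\<^sub>h(a)\<close>, computed with fuel \<open>n\<close>.\<close>
definition beta_below :: "nat \<Rightarrow> 'a list set \<Rightarrow> 'a list set \<Rightarrow> 'a list \<Rightarrow> nat" where
  "beta_below n H Hc h =
     (if chance_below Hc h = {} then 1 else Max (beta_fuel n H Hc ` chance_below Hc h))"

definition height_lt :: "'a list set \<Rightarrow> 'a list \<Rightarrow> nat \<Rightarrow> bool" where
  "height_lt H h n \<longleftrightarrow> (\<forall>t. h @ t \<in> H \<longrightarrow> length t < n)"

lemma reach_eq_chance_reach_mult:
  "reach Hc Pc lab \<pi> z = chance_reach Hc Pc z * player_reach_from Hc lab \<pi> z 0"
  unfolding reach_def chance_reach_def player_reach_from_def player_weight_def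
    atLeast0LessThan prod.distrib[symmetric]
  by (intro prod.cong) auto

lemma player_reach_from_prefix:
  assumes "z = h @ [a] @ t"
  shows "player_reach_from Hc lab \<pi> z (length h)
           = player_weight Hc lab \<pi> h a * player_reach_from Hc lab \<pi> z (Suc (length h))"
  unfolding player_reach_from_def using assms by (simp add: prod.atLeast_Suc_lessThan)

lemma beta_fuel_Suc:
  "beta_fuel (Suc n) H Hc h = (\<Sum>a\<in>acts H h. beta_below n H Hc (h @ [a]))"
  unfolding beta_fuel.simps beta_below_def chance_below_def Let_def append_assoc ..

lemma height_lt_append: "height_lt H h n \<Longrightarrow> height_lt H (h @ t) n"
  unfolding height_lt_def by (metis append_assoc le_add2 le_less_trans length_append)

lemma height_lt_snoc: "height_lt H h (Suc n) \<Longrightarrow> height_lt H (h @ [a]) n"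
  unfolding height_lt_def by (metis Suc_less_SucD append_Cons append_assoc length_Cons self_append_conv2)

lemma height_lt_positive: "h \<in> H \<Longrightarrow> height_lt H h n \<Longrightarrow> 0 < n"
  unfolding height_lt_def by (metis append_Nil2 list.size(3))

context game_tree
begin

lemma chance_reach_nonneg:
  assumes "\<forall>h\<in>Hc. \<forall>a\<in>acts H h. 0 \<le> Pc h a" and "z \<in> H"
  shows "0 \<le> chance_reach Hc Pc z"
  unfolding chance_reach_def using assms nth_in_acts_take by (intro prod_nonneg) auto

lemma player_reach_from_nonneg:
  assumes "valid_strat H Hc lab \<pi>" and "z \<in> H"
  shows "0 \<le> player_reach_from Hc lab \<pi> z i"
  unfolding player_reach_from_def player_weight_def
  using assms nth_in_acts_take take_in_pnodes_iff unfolding valid_strat_def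
  by (intro prod_nonneg) auto

lemma subtree_leaves_root: "subtree_leaves H [] = leaves H"
  unfolding subtree_leaves_def by simp

lemma subtree_leaves_leaf:
  assumes "h \<in> leaves H"
  shows "subtree_leaves H h = {h}"
proof -
  have "z = h" if "z \<in> leaves H" "z = h @ t" for z t
    using that leaf_extension_Nil[OF assms, of t] unfolding leaves_def by simp
  then show ?thesis using assms unfolding subtree_leaves_def by auto
qed

lemma subtree_leaves_split:
  assumes "h \<notin> leaves H"
  shows "subtree_leaves H h = (\<Union>a\<in>acts H h. subtree_leaves H (h @ [a]))"
proof (intro equalityI subsetI)
  fix z assume "z \<in> subtree_leaves H h"
  then obtain t where z: "z \<in> leaves H" "z = h @ t" unfolding subtree_leaves_def by blast
  then obtain a t' where "t = a # t'" using assms by (cases t) auto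
  moreover have "z \<in> H" using z(1) unfolding leaves_def by blast
  ultimately show "z \<in> (\<Union>a\<in>acts H h. subtree_leaves H (h @ [a]))"
    using z prefix_in_H[of "h @ [a]" t' for a] unfolding subtree_leaves_def acts_def by auto
qed (auto simp: subtree_leaves_def)

lemma player_mass_leaf: "h \<in> leaves H \<Longrightarrow> player_mass H Hc lab \<pi> h = 1"
  by (simp add: player_mass_def subtree_leaves_leaf player_reach_from_def)

lemma player_mass_split:
  assumes "h \<notin> leaves H"
  shows "player_mass H Hc lab \<pi> h
           = (\<Sum>a\<in>acts H h. player_weight Hc lab \<pi> h a * player_mass H Hc lab \<pi> (h @ [a]))"
proof -
  have finite_subtree: "finite (subtree_leaves H h')" for h'
    using finite_leaves unfolding subtree_leaves_def by simp
  have "player_mass H Hc lab \<pi> h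
      = (\<Sum>a\<in>acts H h. \<Sum>z\<in>subtree_leaves H (h @ [a]). player_reach_from Hc lab \<pi> z (length h))"
    unfolding player_mass_def subtree_leaves_split[OF assms]
    by (rule sum.UNION_disjoint)
      (simp_all add: finite_acts finite_H finite_subtree, auto simp: subtree_leaves_def)
  also have "\<dots> = (\<Sum>a\<in>acts H h. \<Sum>z\<in>subtree_leaves H (h @ [a]).
                      player_weight Hc lab \<pi> h a * player_reach_from Hc lab \<pi> z (Suc (length h)))"
    by (intro sum.cong refl) (auto simp: subtree_leaves_def player_reach_from_prefix)
  finally show ?thesis by (simp add: player_mass_def sum_distrib_left)
qed

lemma finite_chance_below: "finite (chance_below Hc h)"
  using finite_Hc unfolding chance_below_def by simp

lemma chance_below_leaf:
  assumes "h \<in> leaves H"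
  shows "chance_below Hc h = {}"
proof -
  have "c \<notin> Hc" if "c = h @ t" for c t
  proof
    assume "c \<in> Hc"
    then have "c \<in> H - leaves H" using chance_nodes_subset by blast
    then show False using that leaf_extension_Nil[OF assms, of t] assms by simp
  qed
  then show ?thesis unfolding chance_below_def by blast
qed

lemma beta_fuel_mono: "beta_fuel n H Hc h \<le> beta_fuel (Suc n) H Hc h"
proof (induction n arbitrary: h)
  case (Suc n)
  have "beta_below n H Hc h' \<le> beta_below (Suc n) H Hc h'" for h'
  proof (cases "chance_below Hc h' = {}")
    case False
    show ?thesis
      unfolding beta_below_def if_not_P[OF False]
      by (rule Max_image_le_Max_image[OF finite_chance_below subset_refl False Suc.IH])
  qed (simp add: beta_below_def)
  then show ?case by (simp only: beta_fuel_Suc sum_mono)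
qed simp

lemma beta_fuel_le_beta_below: "c \<in> chance_below Hc h \<Longrightarrow> beta_fuel n H Hc c \<le> beta_below n H Hc h"
  unfolding beta_below_def using finite_chance_below by auto

lemma one_le_beta_below: "height_lt H h n \<Longrightarrow> 1 \<le> beta_below n H Hc h"
proof (induction n arbitrary: h)
  case 0
  have "c \<notin> chance_below Hc h" for c
  proof
    assume "c \<in> chance_below Hc h"
    then obtain t where "c \<in> H" "c = h @ t"
      using chance_nodes_subset unfolding chance_below_def by blast
    then show False using height_lt_positive height_lt_append[OF 0] by blast
  qed
  then have "chance_below Hc h = {}" by blast
  then show ?case by (simp add: beta_below_def)
next
  case (Suc n)
  show ?case
  proof (cases "chance_below Hc h = {}")
    case False
    then obtain c t where c: "c \<in> Hc" "c = h @ t" unfolding chance_below_def by blast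
    then obtain a where a: "a \<in> acts H c" using chance_nodes_subset unfolding leaves_def by blast
    have "1 \<le> beta_below n H Hc (c @ [a])"
      using Suc.IH height_lt_snoc[OF height_lt_append[OF Suc.prems]] c(2) by blast
    also have "\<dots> \<le> beta_fuel (Suc n) H Hc c"
      unfolding beta_fuel_Suc using a finite_acts[OF finite_H] by (intro member_le_sum) auto
    also have "\<dots> \<le> beta_below (Suc n) H Hc h"
      using c by (intro beta_fuel_le_beta_below) (auto simp: chance_below_def)
    finally show ?thesis .
  qed (simp add: beta_below_def)
qed

lemma beta_below_snoc_le:
  assumes "height_lt H h (Suc n)"
  shows "beta_below n H Hc (h @ [a]) \<le> beta_below (Suc n) H Hc h"
proof (cases "chance_below Hc (h @ [a]) = {}")
  case True
  then show ?thesis using one_le_beta_below[OF assms] by (simp add: beta_below_def)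
next
  case False
  have sub: "chance_below Hc (h @ [a]) \<subseteq> chance_below Hc h"
    unfolding chance_below_def by auto
  have nonempty: "chance_below Hc h \<noteq> {}" using sub False by blast
  show ?thesis
    unfolding beta_below_def if_not_P[OF False] if_not_P[OF nonempty]
    by (rule Max_image_le_Max_image[OF finite_chance_below sub False beta_fuel_mono])
qed

lemma player_mass_chance_node_le:
  assumes "h \<in> Hc"
    and IH: "\<And>a. a \<in> acts H h \<Longrightarrow> player_mass H Hc lab \<pi> (h @ [a]) \<le> beta_below n H Hc (h @ [a])"
  shows "player_mass H Hc lab \<pi> h \<le> beta_below (Suc n) H Hc h"
proof -
  have "h \<notin> leaves H" using assms(1) chance_nodes_subset by blast
  then have "player_mass H Hc lab \<pi> h = (\<Sum>a\<in>acts H h. player_mass H Hc lab \<pi> (h @ [a]))"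
    using player_mass_split[of h lab \<pi>] assms(1) by (simp add: player_weight_def)
  also have "\<dots> \<le> (\<Sum>a\<in>acts H h. real (beta_below n H Hc (h @ [a])))"
    using IH by (intro sum_mono) auto
  also have "\<dots> = real (beta_fuel (Suc n) H Hc h)"
    unfolding beta_fuel_Suc of_nat_sum ..
  also have "\<dots> \<le> beta_below (Suc n) H Hc h"
    using assms(1) by (simp add: beta_fuel_le_beta_below chance_below_def del: beta_fuel.simps)
  finally show ?thesis .
qed

lemma player_mass_player_node_le:
  assumes "valid_strat H Hc lab \<pi>" "h \<in> pnodes H Hc" "height_lt H h (Suc n)"
    and IH: "\<And>a. a \<in> acts H h \<Longrightarrow> player_mass H Hc lab \<pi> (h @ [a]) \<le> beta_below n H Hc (h @ [a])"
  shows "player_mass H Hc lab \<pi> h \<le> beta_below (Suc n) H Hc h"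
proof -
  have probs: "\<forall>a\<in>acts H h. 0 \<le> \<pi> (lab h) a" "(\<Sum>a\<in>acts H h. \<pi> (lab h) a) = 1"
    using assms(1,2) unfolding valid_strat_def by auto
  have "h \<notin> leaves H" "h \<notin> Hc" using assms(2) unfolding pnodes_def leaves_def by auto
  then have "player_mass H Hc lab \<pi> h = (\<Sum>a\<in>acts H h. \<pi> (lab h) a * player_mass H Hc lab \<pi> (h @ [a]))"
    using player_mass_split[of h lab \<pi>] by (simp add: player_weight_def)
  also have "\<dots> \<le> (\<Sum>a\<in>acts H h. \<pi> (lab h) a * beta_below (Suc n) H Hc h)"
  proof (intro sum_mono mult_left_mono)
    fix a assume "a \<in> acts H h"
    then show "0 \<le> \<pi> (lab h) a" using probs(1) by blast
    show "player_mass H Hc lab \<pi> (h @ [a]) \<le> beta_below (Suc n) H Hc h"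
      using IH[OF \<open>a \<in> acts H h\<close>] beta_below_snoc_le[OF assms(3), of a]
      by (meson of_nat_le_iff order_trans)
  qed
  also have "\<dots> = beta_below (Suc n) H Hc h"
    using probs(2) by (simp add: sum_distrib_right[symmetric])
  finally show ?thesis .
qed

lemma player_mass_le_beta_below:
  assumes "valid_strat H Hc lab \<pi>"
  shows "h \<in> H \<Longrightarrow> height_lt H h n \<Longrightarrow> player_mass H Hc lab \<pi> h \<le> beta_below n H Hc h"
proof (induction n arbitrary: h)
  case 0
  then show ?case using height_lt_positive by blast
next
  case (Suc n)
  have IH: "player_mass H Hc lab \<pi> (h @ [a]) \<le> beta_below n H Hc (h @ [a])" if "a \<in> acts H h" for a
    using that Suc.IH height_lt_snoc[OF Suc.prems(2)] by (simp add: acts_def)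
  consider "h \<in> leaves H" | "h \<in> Hc" | "h \<in> pnodes H Hc"
    using Suc.prems(1) unfolding pnodes_def leaves_def by blast
  then show ?case
  proof cases
    case 1
    then show ?thesis by (simp add: player_mass_leaf beta_below_def chance_below_leaf)
  next
    case 2
    then show ?thesis using IH by (rule player_mass_chance_node_le)
  next
    case 3
    then show ?thesis using assms Suc.prems(2) IH by (intro player_mass_player_node_le)
  qed
qed

lemma height_lt_root: "height_lt H [] (card H)"
  using length_less_card unfolding height_lt_def by simp

lemma real_beta_below_root: "real (beta_below (card H) H Hc []) = beta_max H Hc"
  unfolding beta_below_def beta_max_def beta_def chance_below_def by simp

lemma beta_max_nonneg: "0 \<le> beta_max H Hc"
  unfolding beta_max_def by simp

lemma player_mass_root_le_beta_max:
  "valid_strat H Hc lab \<pi> \<Longrightarrow> player_mass H Hc lab \<pi> [] \<le> beta_max H Hc"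
  using player_mass_le_beta_below[OF _ root_in_H height_lt_root] real_beta_below_root by simp

lemma chance_weighted_max_nonneg:
  assumes "\<forall>h\<in>Hc. \<forall>a\<in>acts H h. 0 \<le> Pc h a" and "\<forall>z\<in>leaves H. 0 \<le> u z"
  shows "0 \<le> chance_weighted_max H Hc Pc u"
proof -
  obtain z where z: "z \<in> leaves H" using leaves_nonempty by blast
  then have "0 \<le> chance_reach Hc Pc z * u z"
    using assms chance_reach_nonneg unfolding leaves_def by simp
  also have "\<dots> \<le> chance_weighted_max H Hc Pc u"
    unfolding chance_weighted_max_def using finite_leaves z by (intro Max_ge) auto
  finally show ?thesis .
qed

lemma util_le_beta_max_mult:
  assumes Pc: "\<forall>h\<in>Hc. \<forall>a\<in>acts H h. 0 \<le> Pc h a" and \<pi>: "valid_strat H Hc lab \<pi>"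
    and u: "\<forall>z\<in>leaves H. 0 \<le> u z"
  shows "util H Hc Pc lab u \<pi> \<le> beta_max H Hc * chance_weighted_max H Hc Pc u"
proof -
  let ?M = "chance_weighted_max H Hc Pc u"
  have leaves_H: "z \<in> H" if "z \<in> leaves H" for z using that unfolding leaves_def by blast
  have le_M: "chance_reach Hc Pc z * u z \<le> ?M" if "z \<in> leaves H" for z
    unfolding chance_weighted_max_def using finite_leaves that by (intro Max_ge) auto
  have "util H Hc Pc lab u \<pi>
      = (\<Sum>z\<in>leaves H. player_reach_from Hc lab \<pi> z 0 * (chance_reach Hc Pc z * u z))"
    unfolding util_def reach_eq_chance_reach_mult by (simp add: ac_simps)
  also have "\<dots> \<le> (\<Sum>z\<in>leaves H. player_reach_from Hc lab \<pi> z 0 * ?M)"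
    by (intro sum_mono mult_left_mono le_M player_reach_from_nonneg[OF \<pi> leaves_H])
  also have "\<dots> = player_mass H Hc lab \<pi> [] * ?M"
    by (simp add: player_mass_def subtree_leaves_root sum_distrib_right)
  also have "\<dots> \<le> beta_max H Hc * ?M"
    using player_mass_root_le_beta_max[OF \<pi>] chance_weighted_max_nonneg[OF Pc u]
    by (rule mult_right_mono)
  finally show ?thesis .
qed

end

subsection \<open>Lower bound: the empirical strategy\<close>

definition default_strat :: "'a list set \<Rightarrow> 'a list set \<Rightarrow> ('a list \<Rightarrow> 'j) \<Rightarrow> 'j \<Rightarrow> 'a \<Rightarrow> real" where
  "default_strat H Hc lab I a =
     (if a = (SOME b. b \<in> acts H (SOME h. h \<in> pnodes H Hc \<and> lab h = I)) then 1 else 0)"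

definition player_positions :: "'a list set \<Rightarrow> 'a list set \<Rightarrow> 'a list \<Rightarrow> nat set" where
  "player_positions H Hc z = {k. k < length z \<and> take k z \<in> pnodes H Hc}"

definition visits :: "'a list set \<Rightarrow> 'a list set \<Rightarrow> ('a list \<Rightarrow> 'j) \<Rightarrow> 'a list \<Rightarrow> 'j \<Rightarrow> nat set" where
  "visits H Hc lab z I = {k \<in> player_positions H Hc z. lab (take k z) = I}"

definition empirical_strat ::
    "'a list set \<Rightarrow> 'a list set \<Rightarrow> ('a list \<Rightarrow> 'j) \<Rightarrow> 'a list \<Rightarrow> 'j \<Rightarrow> 'a \<Rightarrow> real" where
  "empirical_strat H Hc lab z I a =
     (if n_I H Hc lab z I = 0 then default_strat H Hc lab I a
      else real (n_a H Hc lab z I a) / real (n_I H Hc lab z I))"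

lemma finite_player_positions: "finite (player_positions H Hc z)"
  unfolding player_positions_def by simp

lemma finite_visits: "finite (visits H Hc lab z I)"
  unfolding visits_def by (rule finite_subset[OF _ finite_player_positions]) blast

lemma n_I_eq_card_visits: "n_I H Hc lab z I = card (visits H Hc lab z I)"
  unfolding n_I_def visits_def player_positions_def by (simp add: conj_assoc)

lemma n_a_eq_card_visits: "n_a H Hc lab z I a = card {k \<in> visits H Hc lab z I. z ! k = a}"
  unfolding n_a_def visits_def player_positions_def by (simp add: conj_assoc)

lemma alpha_eq_prod_visited:
  "alpha H Hc lab z =
     (\<Prod>I\<in>(\<lambda>k. lab (take k z)) ` player_positions H Hc z. \<Prod>a\<in>(!) z ` visits H Hc lab z I.
        (real (n_a H Hc lab z I a) / real (n_I H Hc lab z I)) ^ n_a H Hc lab z I a)"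
  (is "_ = prod ?F ?V")
proof -
  let ?J = "{I. (\<exists>k<length z. take k z \<in> pnodes H Hc \<and> lab (take k z) = I) \<and> 1 < n_I H Hc lab z I}"
  have image: "{z ! k |k. k < length z \<and> take k z \<in> pnodes H Hc \<and> lab (take k z) = I}
      = (!) z ` visits H Hc lab z I" for I
    unfolding visits_def player_positions_def by auto
  have "alpha H Hc lab z = prod ?F ?J"
    unfolding alpha_def image ..
  also have "\<dots> = prod ?F ?V"
  proof (rule prod.mono_neutral_left)
    show "finite ?V" by (rule finite_imageI[OF finite_player_positions])
    show "?J \<subseteq> ?V" unfolding player_positions_def by auto
    show "\<forall>I\<in>?V - ?J. ?F I = 1"
    proof
      fix I assume I: "I \<in> ?V - ?J"
      then have "visits H Hc lab z I \<noteq> {}" "\<not> 1 < card (visits H Hc lab z I)"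
        by (auto simp: visits_def player_positions_def n_I_eq_card_visits)
      then obtain k where single: "visits H Hc lab z I = {k}"
        using finite_visits by (metis card_0_eq card_1_singletonE less_one linorder_neqE_nat)
      then have "{k' \<in> visits H Hc lab z I. z ! k' = z ! k} = {k}" by auto
      then have "n_a H Hc lab z I (z ! k) = 1" "n_I H Hc lab z I = 1"
        unfolding n_a_eq_card_visits n_I_eq_card_visits single by simp_all
      then show "?F I = 1" unfolding single by simp
    qed
  qed
  finally show ?thesis .
qed

lemma alpha_pos: "0 < alpha H Hc lab z"
  unfolding alpha_eq_prod_visited
proof (intro prod_pos ballI)
  fix I a assume "a \<in> (!) z ` visits H Hc lab z I"
  then obtain k where k: "k \<in> visits H Hc lab z I" "a = z ! k" by blast
  have "finite {k \<in> visits H Hc lab z I. z ! k = a}"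
    by (rule finite_subset[OF _ finite_visits]) blast
  then have "0 < n_a H Hc lab z I a" "0 < n_I H Hc lab z I"
    using k finite_visits by (auto simp: n_a_eq_card_visits n_I_eq_card_visits card_gt_0_iff)
  then show "0 < (real (n_a H Hc lab z I a) / real (n_I H Hc lab z I)) ^ n_a H Hc lab z I a"
    by simp
qed

context game_tree
begin

lemma default_strat_valid:
  assumes "consistent_labelling H Hc lab"
  shows "valid_strat H Hc lab (default_strat H Hc lab)"
  unfolding valid_strat_def
proof (rule ballI, rule conjI)
  fix h assume h: "h \<in> pnodes H Hc"
  define h0 where "h0 = (SOME h'. h' \<in> pnodes H Hc \<and> lab h' = lab h)"
  have "h0 \<in> pnodes H Hc \<and> lab h0 = lab h"
    unfolding h0_def by (rule someI[of _ h]) (use h in auto)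
  then have acts_h0: "acts H h0 = acts H h" "acts H h0 \<noteq> {}"
    using assms h unfolding consistent_labelling_def pnodes_def by blast+
  define a0 where "a0 = (SOME b. b \<in> acts H h0)"
  have "a0 \<in> acts H h" unfolding a0_def acts_h0(1)[symmetric] using acts_h0(2) by (simp add: some_in_eq)
  moreover have "default_strat H Hc lab (lab h) a = (if a = a0 then 1 else 0)" for a
    unfolding default_strat_def a0_def h0_def ..
  ultimately show "(\<Sum>a\<in>acts H h. default_strat H Hc lab (lab h) a) = 1"
    using finite_acts[OF finite_H] by (simp add: sum.delta')
  show "\<forall>a\<in>acts H h. 0 \<le> default_strat H Hc lab (lab h) a"
    unfolding default_strat_def by simp
qed

lemma sum_n_a_eq_n_I:
  assumes "consistent_labelling H Hc lab" "z \<in> H" "h \<in> pnodes H Hc"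
  shows "(\<Sum>a\<in>acts H h. n_a H Hc lab z (lab h) a) = n_I H Hc lab z (lab h)"
proof -
  have "z ! k \<in> acts H h" if "k \<in> visits H Hc lab z (lab h)" for k
  proof -
    have k: "k < length z" "take k z \<in> pnodes H Hc" "lab (take k z) = lab h"
      using that unfolding visits_def player_positions_def by auto
    then have "acts H (take k z) = acts H h"
      using assms(1,3) unfolding consistent_labelling_def by blast
    then show ?thesis using nth_in_acts_take[OF assms(2) k(1)] by simp
  qed
  then show ?thesis
    unfolding n_a_eq_card_visits n_I_eq_card_visits
    by (intro card_eq_sum_card_fibres[symmetric] finite_visits finite_acts finite_H) blast
qed

lemma empirical_strat_valid:
  assumes "consistent_labelling H Hc lab" "z \<in> H"
  shows "valid_strat H Hc lab (empirical_strat H Hc lab z)"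
  unfolding valid_strat_def
proof (rule ballI, rule conjI)
  fix h assume h: "h \<in> pnodes H Hc"
  note default = default_strat_valid[OF assms(1), unfolded valid_strat_def, rule_format, OF h]
  show "\<forall>a\<in>acts H h. 0 \<le> empirical_strat H Hc lab z (lab h) a"
    using default unfolding empirical_strat_def by simp
  show "(\<Sum>a\<in>acts H h. empirical_strat H Hc lab z (lab h) a) = 1"
  proof (cases "n_I H Hc lab z (lab h) = 0")
    case False
    then show ?thesis
      unfolding empirical_strat_def if_not_P[OF False] sum_divide_distrib[symmetric]
      using sum_n_a_eq_n_I[OF assms h] by (metis of_nat_0_eq_iff of_nat_sum divide_self)
  qed (use default in \<open>simp add: empirical_strat_def\<close>)
qed

lemma player_reach_from_0_eq:
  assumes "z \<in> H"
  shows "player_reach_from Hc lab \<pi> z 0 = (\<Prod>k\<in>player_positions H Hc z. \<pi> (lab (take k z)) (z ! k))"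
proof -
  have positions: "player_positions H Hc z = {k \<in> {0..<length z}. take k z \<notin> Hc}"
    using take_in_pnodes_iff[OF assms] unfolding player_positions_def by auto
  have "(\<Prod>k\<in>player_positions H Hc z. \<pi> (lab (take k z)) (z ! k))
      = (\<Prod>k\<in>{0..<length z}. if take k z \<notin> Hc then \<pi> (lab (take k z)) (z ! k) else 1)"
    unfolding positions by (rule prod.inter_filter) simp
  then show ?thesis
    unfolding player_reach_from_def player_weight_def by (auto intro: prod.cong)
qed

lemma player_reach_empirical_strat:
  assumes "z \<in> H"
  shows "player_reach_from Hc lab (empirical_strat H Hc lab z) z 0 = alpha H Hc lab z"
proof -
  define L where "L k = lab (take k z)" for k
  define c where "c I a = real (n_a H Hc lab z I a) / real (n_I H Hc lab z I)" for I a
  have visits_eq: "visits H Hc lab z I = {k \<in> player_positions H Hc z. L k = I}" for I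
    unfolding visits_def L_def ..
  have "player_reach_from Hc lab (empirical_strat H Hc lab z) z 0
      = (\<Prod>k\<in>player_positions H Hc z. c (L k) (z ! k))"
    unfolding player_reach_from_0_eq[OF assms]
  proof (rule prod.cong[OF refl])
    fix k assume "k \<in> player_positions H Hc z"
    then have "k \<in> visits H Hc lab z (L k)" unfolding visits_eq by simp
    then have "n_I H Hc lab z (L k) \<noteq> 0"
      unfolding n_I_eq_card_visits using finite_visits by (metis card_0_eq empty_iff)
    then show "empirical_strat H Hc lab z (lab (take k z)) (z ! k) = c (L k) (z ! k)"
      unfolding empirical_strat_def c_def L_def by simp
  qed
  also have "\<dots> = (\<Prod>I\<in>L ` player_positions H Hc z.
                      \<Prod>k\<in>{k \<in> player_positions H Hc z. L k = I}. c (L k) (z ! k))"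
    by (rule prod.group[symmetric]) (auto simp: finite_player_positions)
  also have "\<dots> = (\<Prod>I\<in>L ` player_positions H Hc z. \<Prod>k\<in>visits H Hc lab z I. c I (z ! k))"
    unfolding visits_eq by (intro prod.cong refl) auto
  also have "\<dots> = (\<Prod>I\<in>L ` player_positions H Hc z. \<Prod>a\<in>(!) z ` visits H Hc lab z I.
                      c I a ^ n_a H Hc lab z I a)"
    unfolding n_a_eq_card_visits
    by (intro prod.cong refl prod_image_power[OF finite_visits, of "c _" "(!) z"])
  also have "\<dots> = alpha H Hc lab z"
    unfolding alpha_eq_prod_visited c_def L_def ..
  finally show ?thesis .
qed

lemma reach_empirical_strat:
  "z \<in> H \<Longrightarrow> reach Hc Pc lab (empirical_strat H Hc lab z) z = chance_reach Hc Pc z * alpha H Hc lab z"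
  by (simp add: reach_eq_chance_reach_mult player_reach_empirical_strat)

lemma reach_mult_le_util:
  assumes "\<forall>h\<in>Hc. \<forall>a\<in>acts H h. 0 \<le> Pc h a" "valid_strat H Hc lab \<pi>" "\<forall>z\<in>leaves H. 0 \<le> u z"
    and "z \<in> leaves H"
  shows "reach Hc Pc lab \<pi> z * u z \<le> util H Hc Pc lab u \<pi>"
  unfolding util_def reach_eq_chance_reach_mult
proof (rule member_le_sum[OF assms(4) _ finite_leaves])
  fix z' assume "z' \<in> leaves H - {z}"
  then have "z' \<in> H" "0 \<le> u z'" using assms(3) unfolding leaves_def by auto
  then show "0 \<le> chance_reach Hc Pc z' * player_reach_from Hc lab \<pi> z' 0 * u z'"
    using chance_reach_nonneg[OF assms(1)] player_reach_from_nonneg[OF assms(2)] by simp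
qed

lemma util_le_opt_val:
  assumes "\<forall>h\<in>Hc. \<forall>a\<in>acts H h. 0 \<le> Pc h a" "valid_strat H Hc lab \<pi>" "\<forall>z\<in>leaves H. 0 \<le> u z"
  shows "util H Hc Pc lab u \<pi> \<le> opt_val H Hc Pc lab u"
  unfolding opt_val_def
proof (rule cSup_upper)
  show "bdd_above (util H Hc Pc lab u ` {\<pi>. valid_strat H Hc lab \<pi>})"
    using util_le_beta_max_mult[OF assms(1) _ assms(3)] by (intro bdd_aboveI2) auto
qed (use assms(2) in blast)

lemma opt_val_le_beta_max_mult:
  assumes "consistent_labelling H Hc lab"
    and "\<forall>h\<in>Hc. \<forall>a\<in>acts H h. 0 \<le> Pc h a" "\<forall>z\<in>leaves H. 0 \<le> u z"
  shows "opt_val H Hc Pc lab u \<le> beta_max H Hc * chance_weighted_max H Hc Pc u"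
  unfolding opt_val_def
proof (rule cSup_least)
  show "util H Hc Pc lab u ` {\<pi>. valid_strat H Hc lab \<pi>} \<noteq> {}"
    using default_strat_valid[OF assms(1)] by blast
qed (use util_le_beta_max_mult[OF assms(2) _ assms(3)] in blast)

lemma VoR_opt_le_leaf_bound:
  assumes "consistent_labelling H Hc infs"
    and Pc: "\<forall>h\<in>Hc. \<forall>a\<in>acts H h. 0 \<le> Pc h a" and u: "\<forall>z\<in>leaves H. 0 \<le> u z"
  shows "\<exists>z\<in>leaves H. VoR_opt H Hc Pc infs u \<le> beta_max H Hc / alpha H Hc infs z"
proof -
  let ?M = "chance_weighted_max H Hc Pc u"
  obtain z where z: "z \<in> leaves H" "chance_reach Hc Pc z * u z = ?M"
    using Max_in[OF finite_imageI[OF finite_leaves]] leaves_nonempty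
    unfolding chance_weighted_max_def by (metis (no_types, lifting) image_iff image_is_empty)
  then have "z \<in> H" unfolding leaves_def by blast
  let ?\<pi> = "empirical_strat H Hc infs z"
  have "alpha H Hc infs z * ?M = reach Hc Pc infs ?\<pi> z * u z"
    unfolding reach_empirical_strat[OF \<open>z \<in> H\<close>] z(2)[symmetric] by (simp add: ac_simps)
  also have "\<dots> \<le> util H Hc Pc infs u ?\<pi>"
    using reach_mult_le_util[OF Pc empirical_strat_valid[OF assms(1) \<open>z \<in> H\<close>] u z(1)] .
  also have "\<dots> \<le> opt_val H Hc Pc infs u"
    using util_le_opt_val[OF Pc empirical_strat_valid[OF assms(1) \<open>z \<in> H\<close>] u] .
  finally have "VoR_opt H Hc Pc infs u \<le> beta_max H Hc / alpha H Hc infs z"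
    unfolding VoR_opt_def
    using opt_val_le_beta_max_mult[OF consistent_labelling_pr_inf[OF assms(1)] Pc u]
      alpha_pos chance_weighted_max_nonneg[OF Pc u] beta_max_nonneg
    by (intro divide_le_divide_of_bounds)
  then show ?thesis using z(1) by blast
qed

end

theorem theorem2:
  fixes H Hc :: "'a list set" and Pc :: "'a list \<Rightarrow> 'a \<Rightarrow> real" and infs :: "'a list \<Rightarrow> 'i"
  assumes "wf_game H Hc Pc infs"
  shows "(SUP u\<in>{u. \<forall>z\<in>leaves H. 0 \<le> u z}. ereal (VoR_opt H Hc Pc infs u))
           \<le> ereal (VoR_bound H Hc infs)"
proof (rule SUP_least)
  interpret game_tree H Hc using assms by (rule wf_game_imp_game_tree)
  fix u :: "'a list \<Rightarrow> real" assume "u \<in> {u. \<forall>z\<in>leaves H. 0 \<le> u z}"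
  then obtain z where z: "z \<in> leaves H"
    and leaf_bound: "VoR_opt H Hc Pc infs u \<le> beta_max H Hc / alpha H Hc infs z"
    using VoR_opt_le_leaf_bound[OF wf_game_imp_consistent_labelling[OF assms]
        wf_game_imp_chance_nonneg[OF assms]] by blast
  note leaf_bound
  also have "\<dots> \<le> VoR_bound H Hc infs"
    unfolding VoR_bound_def using finite_leaves z by (intro Max_ge) auto
  finally show "ereal (VoR_opt H Hc Pc infs u) \<le> ereal (VoR_bound H Hc infs)" by simp
qed

end
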